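(* Let $(A\otimes V,\mu_{A\otimes V})$ be a weak crossed product with preunit $\nu$ and associated morphisms $\psi_V^A,\sigma_V^A$, let $B$ be an algebra, and let $i_A:A\rightarrow B$ be an algebra morphism and $i_V:V\rightarrow B$ a morphism. The following are equivalent. (i) There exists a unique algebra morphism $\omega:A\times V\rightarrow B$ such that $\omega\circ p_{A\otimes V}\circ\beta_\nu=i_A$ and $\omega\circ p_{A\otimes V}\circ(\eta_A\otimes V)=i_V$. (ii) $\mu_B\circ(i_A\otimes i_V)\circ\nu=\eta_B$, $\mu_B\circ(i_A\otimes i_V)\circ\psi_V^A=\mu_B\circ(i_V\otimes i_A)$ and $\mu_B\circ(i_A\otimes i_V)\circ\sigma_V^A=\mu_B\circ(i_V\otimes i_V)$.
   Context: $\mathcal C$ is a strict monoidal category with tensor product $\otimes$ and unit object $K$ in which every idempotent splits: for every $\nabla:Y\rightarrow Y$ with $\nabla\circ\nabla=\nabla$ there are an object $Z$ and morphisms $i:Z\rightarrow Y$, $p:Y\rightarrow Z$ with $\nabla=i\circ p$, $p\circ i=id_Z$ ($Z$ is the image of $\nabla$, $i$ the injection, $p$ the projection). We write $A\otimes f$ for $id_A\otimes f$. An algebra $A$ has unit $\eta_A$ and product $\mu_A$. Weak crossed products. Let $A$ be an algebra and $V$ an object, and let $\psi_V^A:V\otimes A\rightarrow A\otimes V$ satisfy $(\mu_A\otimes V)\circ(A\otimes\psi_V^A)\circ(\psi_V^A\otimes A)=\psi_V^A\circ(V\otimes\mu_A)$. Then $\nabla_{A\otimes V}=(\mu_A\otimes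 V)\circ(A\otimes\psi_V^A)\circ(A\otimes V\otimes\eta_A)$ is idempotent; $A\times V$ denotes its image, with injection $i_{A\otimes V}$ and projection $p_{A\otimes V}$. Let $\sigma_V^A:V\otimes V\rightarrow A\otimes V$ with $\nabla_{A\otimes V}\circ\sigma_V^A=\sigma_V^A$. The twisted condition is $(\mu_A\otimes V)\circ(A\otimes\psi_V^A)\circ(\sigma_V^A\otimes A)=(\mu_A\otimes V)\circ(A\otimes\sigma_V^A)\circ(\psi_V^A\otimes V)\circ(V\otimes\psi_V^A)$ and the cocycle condition is $(\mu_A\otimes V)\circ(A\otimes\sigma_V^A)\circ(\sigma_V^A\otimes V)=(\mu_A\otimes V)\circ(A\otimes\sigma_V^A)\circ(\psi_V^A\otimes V)\circ(V\otimes\sigma_V^A)$. Put $\mu_{A\otimes V}=(\mu_A\otimes V)\circ(\mu_A\otimes\sigma_V^A)\circ(A\otimes\psi_V^A\otimes V)$. If the twisted and cocycle conditions hold, $(A\otimes V,\mu_{A\otimes V})$ is called a weak crossed product. For $\nu:K\rightarrow A\otimes V$ put $\beta_\nu=(\mu_A\otimes V)\circ(A\otimes\nu)$. A weak crossed product with preunit $\nu$ is a weak crossed product such that $(\mu_A\otimes V)\circ(A\otimes\sigma_V^A)\circ(\psi_V^A\otimes V)\circ(V\otimes\nu)=\nabla_{A\otimes V}\circ(\eta_A\otimes V)$, $(\mu_A\otimes V)\circ(A\otimes\sigma_V^A)\circ(\nu\otimes V)=\nabla_{A\otimes V}\circ(\eta_A\otimes V)$ and $(\mu_A\otimes V)\circ(A\otimes\psi_V^A)\circ(\nu\otimes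 A)=\beta_\nu$. Then $A\times V$ is an algebra with product $\mu_{A\times V}=p_{A\otimes V}\circ\mu_{A\otimes V}\circ(i_{A\otimes V}\otimes i_{A\otimes V})$ and unit $p_{A\otimes V}\circ\nu$. *)

theory Defs
  imports Main
begin

text \<open>A (small or large) category whose arrows are all elements of type 'm and whose
objects are all elements of type 'o; composition Comp g f (= g after f) is total as a
function but only meaningful when Cod f = Dom g.\<close>

record ('o,'m) smcat =
  Dom  :: "'m \<Rightarrow> 'o"
  Cod  :: "'m \<Rightarrow> 'o"
  Idm  :: "'o \<Rightarrow> 'm"
  Comp :: "'m \<Rightarrow> 'm \<Rightarrow> 'm"
  TenO :: "'o \<Rightarrow> 'o \<Rightarrow> 'o"
  TenM :: "'m \<Rightarrow> 'm \<Rightarrow> 'm"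
  Unit :: "'o"

definition hom :: "('o,'m) smcat \<Rightarrow> 'm \<Rightarrow> 'o \<Rightarrow> 'o \<Rightarrow> bool" where
  "hom C f a b \<longleftrightarrow> Dom C f = a \<and> Cod C f = b"

definition splits :: "('o,'m) smcat \<Rightarrow> 'm \<Rightarrow> 'o \<Rightarrow> 'm \<Rightarrow> 'm \<Rightarrow> bool" where
  "splits C e Z i p \<longleftrightarrow> hom C i Z (Dom C e) \<and> hom C p (Dom C e) Z \<and>
     e = Comp C i p \<and> Comp C p i = Idm C Z"

definition strict_monoidal :: "('o,'m) smcat \<Rightarrow> bool" where
  "strict_monoidal C \<longleftrightarrow>
    (\<forall>a. hom C (Idm C a) a a) \<and>
    (\<forall>f g. Cod C f = Dom C g \<longrightarrow> hom C (Comp C g f) (Dom C f) (Cod C g)) \<and>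
    (\<forall>f. Comp C f (Idm C (Dom C f)) = f \<and> Comp C (Idm C (Cod C f)) f = f) \<and>
    (\<forall>f g h. Cod C f = Dom C g \<longrightarrow> Cod C g = Dom C h \<longrightarrow>
        Comp C h (Comp C g f) = Comp C (Comp C h g) f) \<and>
    (\<forall>f g. hom C (TenM C f g) (TenO C (Dom C f) (Dom C g)) (TenO C (Cod C f) (Cod C g))) \<and>
    (\<forall>a b. TenM C (Idm C a) (Idm C b) = Idm C (TenO C a b)) \<and>
    (\<forall>f g f' g'. Cod C f = Dom C g \<longrightarrow> Cod C f' = Dom C g' \<longrightarrow>
        TenM C (Comp C g f) (Comp C g' f') = Comp C (TenM C g g') (TenM C f f')) \<and>
    (\<forall>a b c. TenO C (TenO C a b) c = TenO C a (TenO C b c)) \<and>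
    (\<forall>a. TenO C (Unit C) a = a \<and> TenO C a (Unit C) = a) \<and>
    (\<forall>f g h. TenM C (TenM C f g) h = TenM C f (TenM C g h)) \<and>
    (\<forall>f. TenM C (Idm C (Unit C)) f = f \<and> TenM C f (Idm C (Unit C)) = f) \<and>
    (\<forall>e. Cod C e = Dom C e \<longrightarrow> Comp C e e = e \<longrightarrow> (\<exists>Z i p. splits C e Z i p))"

definition is_algebra :: "('o,'m) smcat \<Rightarrow> 'o \<Rightarrow> 'm \<Rightarrow> 'm \<Rightarrow> bool" where
  "is_algebra C A e m \<longleftrightarrow> hom C e (Unit C) A \<and> hom C m (TenO C A A) A \<and>
    Comp C m (TenM C m (Idm C A)) = Comp C m (TenM C (Idm C A) m) \<and>
    Comp C m (TenM C e (Idm C A)) = Idm C A \<and>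
    Comp C m (TenM C (Idm C A) e) = Idm C A"

definition alg_mor :: "('o,'m) smcat \<Rightarrow> 'o \<Rightarrow> 'm \<Rightarrow> 'm \<Rightarrow> 'o \<Rightarrow> 'm \<Rightarrow> 'm \<Rightarrow> 'm \<Rightarrow> bool" where
  "alg_mor C A eA mA B eB mB f \<longleftrightarrow> hom C f A B \<and> Comp C f eA = eB \<and>
    Comp C f mA = Comp C mB (TenM C f f)"

definition nabla :: "('o,'m) smcat \<Rightarrow> 'o \<Rightarrow> 'm \<Rightarrow> 'm \<Rightarrow> 'o \<Rightarrow> 'm \<Rightarrow> 'm" where
  "nabla C A eA mA V psi = Comp C (TenM C mA (Idm C V))
     (Comp C (TenM C (Idm C A) psi) (TenM C (Idm C (TenO C A V)) eA))"

definition beta :: "('o,'m) smcat \<Rightarrow> 'o \<Rightarrow> 'm \<Rightarrow> 'o \<Rightarrow> 'm \<Rightarrow> 'm" where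
  "beta C A mA V nu = Comp C (TenM C mA (Idm C V)) (TenM C (Idm C A) nu)"

definition mu_AV :: "('o,'m) smcat \<Rightarrow> 'o \<Rightarrow> 'm \<Rightarrow> 'o \<Rightarrow> 'm \<Rightarrow> 'm \<Rightarrow> 'm" where
  "mu_AV C A mA V psi sigma = Comp C (TenM C mA (Idm C V))
     (Comp C (TenM C mA sigma) (TenM C (Idm C A) (TenM C psi (Idm C V))))"

definition mu_AxV :: "('o,'m) smcat \<Rightarrow> 'o \<Rightarrow> 'm \<Rightarrow> 'o \<Rightarrow> 'm \<Rightarrow> 'm \<Rightarrow> 'm \<Rightarrow> 'm \<Rightarrow> 'm" where
  "mu_AxV C A mA V psi sigma i p =
     Comp C p (Comp C (mu_AV C A mA V psi sigma) (TenM C i i))"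

definition wcp_preunit :: "('o,'m) smcat \<Rightarrow> 'o \<Rightarrow> 'm \<Rightarrow> 'm \<Rightarrow> 'o \<Rightarrow> 'm \<Rightarrow> 'm \<Rightarrow> 'm \<Rightarrow> bool" where
  "wcp_preunit C A eA mA V psi sigma nu \<longleftrightarrow>
    (let mV = TenM C mA (Idm C V); iA = Idm C A; iV = Idm C V;
         N = nabla C A eA mA V psi in
    is_algebra C A eA mA \<and>
    hom C psi (TenO C V A) (TenO C A V) \<and>
    Comp C mV (Comp C (TenM C iA psi) (TenM C psi iA)) = Comp C psi (TenM C iV mA) \<and>
    hom C sigma (TenO C V V) (TenO C A V) \<and>
    Comp C N sigma = sigma \<and>
    Comp C mV (Comp C (TenM C iA psi) (TenM C sigma iA)) =
      Comp C mV (Comp C (TenM C iA sigma) (Comp C (TenM C psi iV) (TenM C iV psi))) \<and>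
    Comp C mV (Comp C (TenM C iA sigma) (TenM C sigma iV)) =
      Comp C mV (Comp C (TenM C iA sigma) (Comp C (TenM C psi iV) (TenM C iV sigma))) \<and>
    hom C nu (Unit C) (TenO C A V) \<and>
    Comp C mV (Comp C (TenM C iA sigma) (Comp C (TenM C psi iV) (TenM C iV nu))) =
      Comp C N (TenM C eA iV) \<and>
    Comp C mV (Comp C (TenM C iA sigma) (TenM C nu iV)) = Comp C N (TenM C eA iV) \<and>
    Comp C mV (Comp C (TenM C iA psi) (TenM C nu iA)) = beta C A mA V nu)"

end

theory Submission
  imports Defs
begin

text \<open>Put \<open>\<phi> = \<mu>\<^sub>B \<circ> (i\<^sub>A \<otimes> i\<^sub>V)\<close>. In \<open>A \<otimes> V\<close> the products of the two generators
  \<open>\<beta>\<^sub>\<nu>\<close> and \<open>\<eta>\<^sub>A \<otimes> V\<close> give back the structure maps: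
  \<open>\<mu>\<^sub>A\<^sub>\<otimes>\<^sub>V \<circ> (\<beta>\<^sub>\<nu> \<otimes> \<eta>\<^sub>A \<otimes> V) = \<nabla>\<close>, \<open>\<mu>\<^sub>A\<^sub>\<otimes>\<^sub>V \<circ> (\<eta>\<^sub>A \<otimes> V \<otimes> \<beta>\<^sub>\<nu>) = \<psi>\<close> and
  \<open>\<mu>\<^sub>A\<^sub>\<otimes>\<^sub>V \<circ> (\<eta>\<^sub>A \<otimes> V \<otimes> \<eta>\<^sub>A \<otimes> V) = \<sigma>\<close>. Since \<open>\<nabla>\<close> is absorbed by \<open>\<mu>\<^sub>A\<^sub>\<otimes>\<^sub>V\<close> on
  both sides, an algebra morphism \<open>\<omega>\<close> with the prescribed values on the generators satisfies
  \<open>\<omega> \<circ> p = \<phi>\<close>; this gives uniqueness, and evaluating \<open>\<phi>\<close> on \<open>\<nu>\<close>, \<open>\<psi>\<close>, \<open>\<sigma>\<close> gives (ii).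
  Conversely, under (ii) \<open>\<phi>\<close> absorbs \<open>\<nabla>\<close> and turns \<open>\<mu>\<^sub>A\<^sub>\<otimes>\<^sub>V\<close> into
  \<open>\<mu>\<^sub>B \<circ> (\<phi> \<otimes> \<phi>)\<close>, so \<open>\<omega> = \<phi> \<circ> i\<close> is the required morphism.\<close>

locale strict_monoidal_cat =
  fixes C :: "('o,'m) smcat"
  assumes strict_monoidal: "strict_monoidal C"
begin

abbreviation cmp (infixr "\<cdot>" 55) where "g \<cdot> f \<equiv> Comp C g f"
abbreviation tens (infixr "\<otimes>" 60) where "f \<otimes> g \<equiv> TenM C f g"
abbreviation tens_obj (infixr "\<odot>" 60) where "a \<odot> b \<equiv> TenO C a b"
abbreviation idm where "idm a \<equiv> Idm C a"
abbreviation dom where "dom f \<equiv> Dom C f"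
abbreviation cod where "cod f \<equiv> Cod C f"
abbreviation U where "U \<equiv> Unit C"

lemma dom_idm [simp]: "dom (idm a) = a" and cod_idm [simp]: "cod (idm a) = a"
  using strict_monoidal by (auto simp: strict_monoidal_def hom_def)

lemma dom_comp [simp]: "cod f = dom g \<Longrightarrow> dom (g \<cdot> f) = dom f"
  and cod_comp [simp]: "cod f = dom g \<Longrightarrow> cod (g \<cdot> f) = cod g"
  using strict_monoidal by (auto simp: strict_monoidal_def hom_def)

lemma dom_tens [simp]: "dom (f \<otimes> g) = dom f \<odot> dom g"
  and cod_tens [simp]: "cod (f \<otimes> g) = cod f \<odot> cod g"
  using strict_monoidal by (auto simp: strict_monoidal_def hom_def)

lemma tens_obj_assoc [simp]: "(a \<odot> b) \<odot> c = a \<odot> (b \<odot> c)"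
  and tens_obj_unit [simp]: "U \<odot> a = a" "a \<odot> U = a"
  using strict_monoidal by (auto simp: strict_monoidal_def)

lemma comp_assoc [simp]: "cod f = dom g \<Longrightarrow> cod g = dom h \<Longrightarrow> (h \<cdot> g) \<cdot> f = h \<cdot> (g \<cdot> f)"
  using strict_monoidal by (auto simp: strict_monoidal_def)

lemma comp_idr [simp]: "dom f = a \<Longrightarrow> f \<cdot> idm a = f"
  and comp_idl [simp]: "cod f = b \<Longrightarrow> idm b \<cdot> f = f"
  using strict_monoidal by (auto simp: strict_monoidal_def)

lemma tens_assoc [simp]: "(f \<otimes> g) \<otimes> h = f \<otimes> (g \<otimes> h)"
  and tens_unit [simp]: "idm U \<otimes> f = f" "f \<otimes> idm U = f"
  using strict_monoidal by (auto simp: strict_monoidal_def)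

lemma tens_idm [simp]: "idm a \<otimes> idm b = idm (a \<odot> b)"
  using strict_monoidal by (auto simp: strict_monoidal_def)

lemma tens_idm_assoc [simp]: "idm a \<otimes> (idm b \<otimes> k) = idm (a \<odot> b) \<otimes> k"
  by (metis tens_assoc tens_idm)

lemma interchange:
  "cod f = dom g \<Longrightarrow> cod f' = dom g' \<Longrightarrow> (g \<otimes> g') \<cdot> (f \<otimes> f') = (g \<cdot> f) \<otimes> (g' \<cdot> f')"
  using strict_monoidal by (auto simp: strict_monoidal_def)

lemma comp_tens_left: "cod f = dom g \<Longrightarrow> (g \<cdot> f) \<otimes> h = (g \<otimes> idm (cod h)) \<cdot> (f \<otimes> h)"
  using interchange[of f g h "idm (cod h)"] by simp

lemma comp_assoc_subst:
  assumes "cod x = dom f" "cod f = dom g" "g \<cdot> f = k"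
  shows "g \<cdot> (f \<cdot> x) = k \<cdot> x"
  using assms by (simp flip: comp_assoc)

lemma comp_assoc_subst3:
  assumes "cod x = dom f" "cod f = dom g" "cod g = dom h" "h \<cdot> (g \<cdot> f) = k"
  shows "h \<cdot> (g \<cdot> (f \<cdot> x)) = k \<cdot> x"
  using assms by (simp flip: comp_assoc)

lemma comp_cong_ctx:
  assumes "X \<cdot> Y = X' \<cdot> Y'" "cod h = dom Y" "cod Y = dom X" "cod Y' = dom X'" "dom Y' = dom Y"
  shows "X \<cdot> (Y \<cdot> h) = X' \<cdot> (Y' \<cdot> h)"
  using assms by (metis comp_assoc)

text \<open>Rewrite rules normalising string diagrams for the simplifier: composites are right-nested,
  and two stacked layers of tensor products are merged by interchange whenever their factor
  boundaries can be aligned. Tensor products are kept right-nested too, so the factors of two layers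
  need not line up syntactically; every alignment pattern occurring below gets its own rule, often
  with a variant under a right context \<open>_ \<cdot> h\<close>.\<close>

lemma interchange_ctx:
  assumes "cod f = dom g" "cod f' = dom g'" "cod h = dom f \<odot> dom f'"
  shows "(g \<otimes> g') \<cdot> ((f \<otimes> f') \<cdot> h) = ((g \<cdot> f) \<otimes> (g' \<cdot> f')) \<cdot> h"
  by (rule comp_assoc_subst) (use assms in \<open>simp_all only: interchange dom_tens cod_tens\<close>)

lemma idm_tens_point: "dom g = U \<Longrightarrow> cod f = b \<Longrightarrow> (idm b \<otimes> g) \<cdot> f = f \<otimes> g"
  using interchange[of f "idm b" "idm U" g] by simp

lemma point_tens_idm: "dom g = U \<Longrightarrow> cod f = b \<Longrightarrow> (g \<otimes> idm b) \<cdot> f = g \<otimes> f"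
  using interchange[of "idm U" g f "idm b"] by simp

lemma interchange_idm_upper1:
  "cod f = a \<Longrightarrow> cod f' = b \<odot> dom g' \<Longrightarrow>
    (idm (a \<odot> b) \<otimes> g') \<cdot> (f \<otimes> f') = f \<otimes> ((idm b \<otimes> g') \<cdot> f')"
  by (subst tens_idm[symmetric], subst tens_assoc, subst interchange) auto

lemma interchange_regroup2:
  "dom g = cod f1 \<odot> cod f2 \<Longrightarrow> cod f3 = dom g' \<Longrightarrow>
    (g \<otimes> g') \<cdot> (f1 \<otimes> (f2 \<otimes> f3)) = (g \<cdot> (f1 \<otimes> f2)) \<otimes> (g' \<cdot> f3)"
  by (subst tens_assoc[symmetric], subst interchange) auto

lemma interchange_regroup2_ctx:
  "dom g = cod f1 \<odot> cod f2 \<Longrightarrow> cod f3 = dom g' \<Longrightarrow> cod h = dom (f1 \<otimes> (f2 \<otimes> f3)) \<Longrightarrow>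
    (g \<otimes> g') \<cdot> ((f1 \<otimes> (f2 \<otimes> f3)) \<cdot> h) = ((g \<cdot> (f1 \<otimes> f2)) \<otimes> (g' \<cdot> f3)) \<cdot> h"
  by (rule comp_assoc_subst) (simp_all add: interchange_regroup2)

lemma interchange_straddle_left:
  assumes "cod h1 = dom g" "dom g' = cod h2 \<odot> cod x" "cod w = dom h1 \<odot> dom h2"
  shows "(g \<otimes> g') \<cdot> (((h1 \<otimes> h2) \<cdot> w) \<otimes> x) =
    ((g \<cdot> h1) \<otimes> (g' \<cdot> (h2 \<otimes> x))) \<cdot> (w \<otimes> idm (dom x))"
proof -
  have "((h1 \<otimes> h2) \<cdot> w) \<otimes> x = (h1 \<otimes> (h2 \<otimes> x)) \<cdot> (w \<otimes> idm (dom x))"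
    using interchange[of w "h1 \<otimes> h2" "idm (dom x)" x] assms by simp
  then have "(g \<otimes> g') \<cdot> (((h1 \<otimes> h2) \<cdot> w) \<otimes> x) = ((g \<otimes> g') \<cdot> (h1 \<otimes> (h2 \<otimes> x))) \<cdot> (w \<otimes> idm (dom x))"
    using assms by (subst comp_assoc) simp_all
  also have "(g \<otimes> g') \<cdot> (h1 \<otimes> (h2 \<otimes> x)) = (g \<cdot> h1) \<otimes> (g' \<cdot> (h2 \<otimes> x))"
    using interchange[of h1 g "h2 \<otimes> x" g'] assms by simp
  finally show ?thesis .
qed

lemma interchange_straddle_left_ctx:
  "cod h1 = dom g \<Longrightarrow> dom g' = cod h2 \<odot> cod x \<Longrightarrow> cod w = dom h1 \<odot> dom h2 \<Longrightarrow> cod k = dom w \<odot> dom x \<Longrightarrow>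
    (g \<otimes> g') \<cdot> ((((h1 \<otimes> h2) \<cdot> w) \<otimes> x) \<cdot> k) =
    ((g \<cdot> h1) \<otimes> (g' \<cdot> (h2 \<otimes> x))) \<cdot> ((w \<otimes> idm (dom x)) \<cdot> k)"
  by (rule comp_cong_ctx[OF interchange_straddle_left]) simp_all

lemma interchange_straddle_right:
  assumes "dom g = cod x \<odot> cod h1" "cod h2 = dom g'" "cod w = dom h1 \<odot> dom h2"
  shows "(g \<otimes> g') \<cdot> (x \<otimes> ((h1 \<otimes> h2) \<cdot> w)) =
    ((g \<cdot> (x \<otimes> h1)) \<otimes> (g' \<cdot> h2)) \<cdot> (idm (dom x) \<otimes> w)"
proof -
  have "x \<otimes> ((h1 \<otimes> h2) \<cdot> w) = ((x \<otimes> h1) \<otimes> h2) \<cdot> (idm (dom x) \<otimes> w)"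
    using interchange[of "idm (dom x)" x w "h1 \<otimes> h2"] assms by simp
  then have "(g \<otimes> g') \<cdot> (x \<otimes> ((h1 \<otimes> h2) \<cdot> w)) = ((g \<otimes> g') \<cdot> ((x \<otimes> h1) \<otimes> h2)) \<cdot> (idm (dom x) \<otimes> w)"
    using assms by (subst comp_assoc) simp_all
  also have "(g \<otimes> g') \<cdot> ((x \<otimes> h1) \<otimes> h2) = (g \<cdot> (x \<otimes> h1)) \<otimes> (g' \<cdot> h2)"
    using interchange[of "x \<otimes> h1" g h2 g'] assms by (simp del: tens_assoc)
  finally show ?thesis .
qed

lemma interchange_straddle_right_ctx:
  "dom g = cod x \<odot> cod h1 \<Longrightarrow> cod h2 = dom g' \<Longrightarrow> cod w = dom h1 \<odot> dom h2 \<Longrightarrow> cod k = dom x \<odot> dom w \<Longrightarrow>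
    (g \<otimes> g') \<cdot> ((x \<otimes> ((h1 \<otimes> h2) \<cdot> w)) \<cdot> k) =
    ((g \<cdot> (x \<otimes> h1)) \<otimes> (g' \<cdot> h2)) \<cdot> ((idm (dom x) \<otimes> w) \<cdot> k)"
  by (rule comp_cong_ctx[OF interchange_straddle_right]) simp_all

lemma interchange_idm_straddle_left:
  assumes "cod h1 = a" "cod h2 \<odot> cod x = b \<odot> dom g'" "cod w = dom h1 \<odot> dom h2"
  shows "(idm (a \<odot> b) \<otimes> g') \<cdot> (((h1 \<otimes> h2) \<cdot> w) \<otimes> x) =
    (h1 \<otimes> ((idm b \<otimes> g') \<cdot> (h2 \<otimes> x))) \<cdot> (w \<otimes> idm (dom x))"
proof -
  have "(idm (a \<odot> b) \<otimes> g') \<cdot> (((h1 \<otimes> h2) \<cdot> w) \<otimes> x) =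
      (idm a \<otimes> (idm b \<otimes> g')) \<cdot> (((h1 \<otimes> h2) \<cdot> w) \<otimes> x)"
    by (simp only: tens_idm_assoc)
  also have "\<dots> = ((idm a \<cdot> h1) \<otimes> ((idm b \<otimes> g') \<cdot> (h2 \<otimes> x))) \<cdot> (w \<otimes> idm (dom x))"
    by (rule interchange_straddle_left) (use assms in simp_all)
  finally show ?thesis using assms by simp
qed

lemma interchange_idm_straddle_left_ctx:
  "cod h1 = a \<Longrightarrow> cod h2 \<odot> cod x = b \<odot> dom g' \<Longrightarrow> cod w = dom h1 \<odot> dom h2 \<Longrightarrow> cod k = dom w \<odot> dom x \<Longrightarrow>
    (idm (a \<odot> b) \<otimes> g') \<cdot> ((((h1 \<otimes> h2) \<cdot> w) \<otimes> x) \<cdot> k) =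
    (h1 \<otimes> ((idm b \<otimes> g') \<cdot> (h2 \<otimes> x))) \<cdot> ((w \<otimes> idm (dom x)) \<cdot> k)"
  by (rule comp_cong_ctx[OF interchange_idm_straddle_left]) simp_all

lemma interchange_straddle_right3:
  "dom g = cod x \<odot> cod h1 \<odot> cod h2 \<Longrightarrow> cod h3 = dom g' \<Longrightarrow> cod w = dom h1 \<odot> dom h2 \<odot> dom h3 \<Longrightarrow>
    (g \<otimes> g') \<cdot> (x \<otimes> ((h1 \<otimes> (h2 \<otimes> h3)) \<cdot> w)) =
    ((g \<cdot> (x \<otimes> (h1 \<otimes> h2))) \<otimes> (g' \<cdot> h3)) \<cdot> (idm (dom x) \<otimes> w)"
  using interchange_straddle_right[of g x "h1 \<otimes> h2" h3 g' w] by simp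

lemmas diagram_simps =
  interchange interchange_ctx idm_tens_point point_tens_idm interchange_idm_upper1
  interchange_regroup2 interchange_regroup2_ctx
  interchange_straddle_left interchange_straddle_left_ctx
  interchange_straddle_right interchange_straddle_right_ctx
  interchange_idm_straddle_left interchange_idm_straddle_left_ctx interchange_straddle_right3
declare diagram_simps [simp]

text \<open>\<open>simp_guard f\<close> is always true, but it is a simp fact only for composites, tensors and the
  named structure morphisms, never for an identity. As a premise it keeps the two rules that pull
  a tensor factor up through a layer from looping on identities.\<close>

definition simp_guard :: "'m \<Rightarrow> bool" where "simp_guard f \<longleftrightarrow> True"

lemma simp_guard_comp [simp]: "simp_guard (g \<cdot> f)"
  and simp_guard_tens [simp]: "simp_guard (f \<otimes> g)"
  by (simp_all add: simp_guard_def)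

lemma interchange_pull_left [simp]:
  assumes "simp_guard f" "dom g = cod f \<odot> c" "cod Q = c \<odot> dom g'"
  shows "(g \<otimes> g') \<cdot> (f \<otimes> Q) = ((g \<cdot> (f \<otimes> idm c)) \<otimes> g') \<cdot> (idm (dom f) \<otimes> Q)"
proof -
  have "f \<otimes> Q = (f \<otimes> idm c \<otimes> idm (dom g')) \<cdot> (idm (dom f) \<otimes> Q)"
    using interchange[of "idm (dom f)" f Q "idm (cod Q)"] assms by (simp del: diagram_simps)
  then have "(g \<otimes> g') \<cdot> (f \<otimes> Q) = ((g \<otimes> g') \<cdot> ((f \<otimes> idm c) \<otimes> idm (dom g'))) \<cdot> (idm (dom f) \<otimes> Q)"
    using assms by (subst comp_assoc) (simp_all del: diagram_simps)
  also have "(g \<otimes> g') \<cdot> ((f \<otimes> idm c) \<otimes> idm (dom g')) = (g \<cdot> (f \<otimes> idm c)) \<otimes> g'"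
    using interchange[of "f \<otimes> idm c" g "idm (dom g')" g'] assms by (simp del: diagram_simps)
  finally show ?thesis .
qed

lemma interchange_pull_left_ctx [simp]:
  "simp_guard f \<Longrightarrow> dom g = cod f \<odot> c \<Longrightarrow> cod Q = c \<odot> dom g' \<Longrightarrow> cod h = dom f \<odot> dom Q \<Longrightarrow>
    (g \<otimes> g') \<cdot> ((f \<otimes> Q) \<cdot> h) = ((g \<cdot> (f \<otimes> idm c)) \<otimes> g') \<cdot> ((idm (dom f) \<otimes> Q) \<cdot> h)"
  by (rule comp_cong_ctx[OF interchange_pull_left]) (simp_all del: diagram_simps)

lemma interchange_pull_right [simp]:
  assumes "simp_guard Y" "cod f = dom g \<odot> c" "dom g' = c \<odot> cod Y"
  shows "(g \<otimes> g') \<cdot> (f \<otimes> Y) = (g \<otimes> (g' \<cdot> (idm c \<otimes> Y))) \<cdot> (f \<otimes> idm (dom Y))"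
proof -
  have "(g \<otimes> (g' \<cdot> (idm c \<otimes> Y))) \<cdot> (f \<otimes> idm (dom Y)) =
      ((g \<otimes> g') \<cdot> (idm (dom g) \<otimes> (idm c \<otimes> Y))) \<cdot> (f \<otimes> idm (dom Y))"
    using assms interchange[of "idm (dom g)" g "idm c \<otimes> Y" g'] by (simp del: diagram_simps)
  also have "\<dots> = (g \<otimes> g') \<cdot> ((idm (dom g) \<otimes> (idm c \<otimes> Y)) \<cdot> (f \<otimes> idm (dom Y)))"
    using assms by (simp del: diagram_simps)
  also have "(idm (dom g) \<otimes> (idm c \<otimes> Y)) \<cdot> (f \<otimes> idm (dom Y)) = f \<otimes> Y"
    using assms interchange[of f "idm (dom g \<odot> c)" "idm (dom Y)" Y] by (simp del: diagram_simps)
  finally show ?thesis by simp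
qed

lemma interchange_pull_right_ctx [simp]:
  "simp_guard Y \<Longrightarrow> cod f = dom g \<odot> c \<Longrightarrow> dom g' = c \<odot> cod Y \<Longrightarrow> cod h = dom f \<odot> dom Y \<Longrightarrow>
    (g \<otimes> g') \<cdot> ((f \<otimes> Y) \<cdot> h) = ((g \<otimes> (g' \<cdot> (idm c \<otimes> Y))) \<cdot> (f \<otimes> idm (dom Y))) \<cdot> h"
  by (rule comp_assoc_subst[OF _ _ interchange_pull_right]) (simp_all del: diagram_simps)

end

locale monoid_obj = strict_monoidal_cat +
  fixes X e m
  assumes algebra: "is_algebra C X e m"
begin

lemma unit_dom [simp]: "dom e = U" and unit_cod [simp]: "cod e = X"
  and mult_dom [simp]: "dom m = X \<odot> X" and mult_cod [simp]: "cod m = X"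
  and simp_guard_unit [simp]: "simp_guard e" and simp_guard_mult [simp]: "simp_guard m"
  using algebra by (auto simp: is_algebra_def hom_def simp_guard_def)

lemma assoc [simp]: "m \<cdot> (idm X \<otimes> m) = m \<cdot> (m \<otimes> idm X)"
  using algebra by (simp add: is_algebra_def)

lemma assoc_nested [simp]:
  assumes "cod f = X" "cod Y = X \<odot> X"
  shows "m \<cdot> (f \<otimes> (m \<cdot> Y)) = m \<cdot> ((m \<otimes> idm X) \<cdot> (f \<otimes> Y))"
proof -
  have "m \<cdot> (f \<otimes> (m \<cdot> Y)) = m \<cdot> ((idm X \<otimes> m) \<cdot> (f \<otimes> Y))"
    using assms interchange[of f "idm X" Y m] by (simp del: diagram_simps)
  also have "\<dots> = m \<cdot> ((m \<otimes> idm X) \<cdot> (f \<otimes> Y))"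
    by (rule comp_cong_ctx[OF assoc]) (use assms in simp_all)
  finally show ?thesis .
qed

lemma assoc_nested_ctx [simp]:
  assumes "cod f = X" "cod Y = X \<odot> X" "cod h = dom f \<odot> dom Y"
  shows "m \<cdot> ((f \<otimes> (m \<cdot> Y)) \<cdot> h) = m \<cdot> ((m \<otimes> idm X) \<cdot> ((f \<otimes> Y) \<cdot> h))"
proof -
  have "m \<cdot> ((f \<otimes> (m \<cdot> Y)) \<cdot> h) = (m \<cdot> (f \<otimes> (m \<cdot> Y))) \<cdot> h"
    using assms by (simp del: diagram_simps assoc_nested)
  also have "\<dots> = m \<cdot> ((m \<otimes> idm X) \<cdot> ((f \<otimes> Y) \<cdot> h))"
    using assms by (simp del: diagram_simps)
  finally show ?thesis .
qed

lemma unit_left [simp]: "cod x = X \<Longrightarrow> m \<cdot> (e \<otimes> x) = x"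
  using algebra point_tens_idm[of e x X] comp_assoc_subst[of x "e \<otimes> idm X" m "idm X"]
  by (simp add: is_algebra_def del: diagram_simps)

lemma unit_right [simp]: "cod x = X \<Longrightarrow> m \<cdot> (x \<otimes> e) = x"
  using algebra idm_tens_point[of e x X] comp_assoc_subst[of x "idm X \<otimes> e" m "idm X"]
  by (simp add: is_algebra_def del: diagram_simps)

end

locale weak_crossed_product = strict_monoidal_cat +
  fixes A eA mA V psi sigma nu
  assumes wcp: "wcp_preunit C A eA mA V psi sigma nu"
begin

sublocale A: monoid_obj C A eA mA
  using wcp by unfold_locales (simp add: wcp_preunit_def Let_def)

abbreviation mV where "mV \<equiv> mA \<otimes> idm V"
abbreviation N where "N \<equiv> nabla C A eA mA V psi"
abbreviation M where "M \<equiv> mu_AV C A mA V psi sigma"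
abbreviation Beta where "Beta \<equiv> beta C A mA V nu"

lemma psi_dom [simp]: "dom psi = V \<odot> A" and psi_cod [simp]: "cod psi = A \<odot> V"
  and sigma_dom [simp]: "dom sigma = V \<odot> V" and sigma_cod [simp]: "cod sigma = A \<odot> V"
  and nu_dom [simp]: "dom nu = U" and nu_cod [simp]: "cod nu = A \<odot> V"
  and simp_guard_atoms [simp]: "simp_guard psi" "simp_guard sigma" "simp_guard nu"
  using wcp by (auto simp: wcp_preunit_def Let_def hom_def simp_guard_def)

lemma psi_mult: "mV \<cdot> ((idm A \<otimes> psi) \<cdot> (psi \<otimes> idm A)) = psi \<cdot> (idm V \<otimes> mA)"
  and nabla_sigma: "N \<cdot> sigma = sigma"
  and twisted: "mV \<cdot> ((idm A \<otimes> psi) \<cdot> (sigma \<otimes> idm A)) =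
      mV \<cdot> ((idm A \<otimes> sigma) \<cdot> ((psi \<otimes> idm V) \<cdot> (idm V \<otimes> psi)))"
  and cocycle: "mV \<cdot> ((idm A \<otimes> sigma) \<cdot> (sigma \<otimes> idm V)) =
      mV \<cdot> ((idm A \<otimes> sigma) \<cdot> ((psi \<otimes> idm V) \<cdot> (idm V \<otimes> sigma)))"
  and preunit_right: "mV \<cdot> ((idm A \<otimes> sigma) \<cdot> ((psi \<otimes> idm V) \<cdot> (idm V \<otimes> nu))) = N \<cdot> (eA \<otimes> idm V)"
  and preunit_left: "mV \<cdot> ((idm A \<otimes> sigma) \<cdot> (nu \<otimes> idm V)) = N \<cdot> (eA \<otimes> idm V)"
  and preunit_beta: "mV \<cdot> ((idm A \<otimes> psi) \<cdot> (nu \<otimes> idm A)) = Beta"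
  using wcp unfolding wcp_preunit_def Let_def by blast+

lemma dom_nabla [simp]: "dom N = A \<odot> V" and cod_nabla [simp]: "cod N = A \<odot> V"
  by (simp_all add: nabla_def)
lemma dom_mu [simp]: "dom M = A \<odot> V \<odot> A \<odot> V" and cod_mu [simp]: "cod M = A \<odot> V"
  by (simp_all add: mu_AV_def)
lemma dom_beta [simp]: "dom Beta = A" and cod_beta [simp]: "cod Beta = A \<odot> V"
  by (simp_all add: beta_def)

lemma nabla_psi: "N \<cdot> psi = psi"
proof -
  have "N \<cdot> psi = mV \<cdot> ((idm A \<otimes> psi) \<cdot> ((psi \<otimes> idm A) \<cdot> (idm (V \<odot> A) \<otimes> eA)))"
    by (simp add: nabla_def)
  also have "\<dots> = (psi \<cdot> (idm V \<otimes> mA)) \<cdot> (idm (V \<odot> A) \<otimes> eA)"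
    by (rule comp_assoc_subst3[OF _ _ _ psi_mult]) simp_all
  also have "\<dots> = psi" by simp
  finally show ?thesis .
qed

lemma nabla_nu: "N \<cdot> nu = nu"
proof -
  have "N \<cdot> nu = mV \<cdot> ((idm A \<otimes> psi) \<cdot> ((nu \<otimes> idm A) \<cdot> eA))" by (simp add: nabla_def)
  also have "\<dots> = Beta \<cdot> eA" by (rule comp_assoc_subst3[OF _ _ _ preunit_beta]) simp_all
  also have "\<dots> = nu" by (simp add: beta_def)
  finally show ?thesis .
qed

lemma psi_unit: "psi \<cdot> (idm V \<otimes> eA) = N \<cdot> (eA \<otimes> idm V)"
  by (simp add: nabla_def)

lemma mV_nabla: "mV \<cdot> (idm A \<otimes> N) = N \<cdot> mV"
  by (simp add: nabla_def)

lemma nabla_sigma_unfolded [simp]: "mV \<cdot> ((idm A \<otimes> (psi \<cdot> (idm V \<otimes> eA))) \<cdot> sigma) = sigma"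
  using nabla_sigma by (simp add: nabla_def)

lemma mu_alt: "M = mV \<cdot> ((idm A \<otimes> sigma) \<cdot> ((mV \<cdot> (idm A \<otimes> psi)) \<otimes> idm V))"
  by (simp add: mu_AV_def)

lemma psi_nabla: "mV \<cdot> ((idm A \<otimes> psi) \<cdot> (N \<otimes> idm A)) = mV \<cdot> (idm A \<otimes> psi)"
proof -
  have "mV \<cdot> ((idm A \<otimes> psi) \<cdot> (N \<otimes> idm A)) =
      mV \<cdot> (idm A \<otimes> ((mV \<cdot> ((idm A \<otimes> psi) \<cdot> (psi \<otimes> idm A))) \<cdot> (idm V \<otimes> eA \<otimes> idm A)))"
    by (simp add: nabla_def)
  also have "\<dots> = mV \<cdot> (idm A \<otimes> ((psi \<cdot> (idm V \<otimes> mA)) \<cdot> (idm V \<otimes> eA \<otimes> idm A)))"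
    by (simp only: psi_mult)
  also have "\<dots> = mV \<cdot> (idm A \<otimes> psi)" by simp
  finally show ?thesis .
qed

lemma mu_nabla_left: "M \<cdot> (N \<otimes> idm (A \<odot> V)) = M"
proof -
  have "M \<cdot> (N \<otimes> idm (A \<odot> V)) =
      mV \<cdot> ((idm A \<otimes> sigma) \<cdot> ((mV \<cdot> ((idm A \<otimes> psi) \<cdot> (N \<otimes> idm A))) \<otimes> idm V))"
    by (simp add: mu_alt)
  also have "\<dots> = M" by (simp only: psi_nabla mu_alt)
  finally show ?thesis .
qed

lemma twisted_unit:
  "mV \<cdot> ((idm A \<otimes> sigma) \<cdot> ((psi \<otimes> idm V) \<cdot> (idm V \<otimes> (psi \<cdot> (idm V \<otimes> eA))))) = sigma"
proof -
  have "(mV \<cdot> ((idm A \<otimes> psi) \<cdot> (sigma \<otimes> idm A))) \<cdot> (idm (V \<odot> V) \<otimes> eA) =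
      (mV \<cdot> ((idm A \<otimes> sigma) \<cdot> ((psi \<otimes> idm V) \<cdot> (idm V \<otimes> psi)))) \<cdot> (idm (V \<odot> V) \<otimes> eA)"
    by (simp only: twisted)
  then show ?thesis by simp
qed

lemma mu_nabla_right: "M \<cdot> (idm (A \<odot> V) \<otimes> N) = M"
proof -
  have "M \<cdot> (idm (A \<odot> V) \<otimes> N) =
      mV \<cdot> (idm A \<otimes> (mV \<cdot> ((idm A \<otimes> sigma) \<cdot> (((mV \<cdot> ((idm A \<otimes> psi) \<cdot> (psi \<otimes> idm A))) \<otimes> idm V) \<cdot>
        (idm (V \<odot> A) \<otimes> (psi \<cdot> (idm V \<otimes> eA)))))))"
    by (simp add: nabla_def mu_AV_def psi_mult)
  also have "\<dots> = mV \<cdot> (idm A \<otimes> (mV \<cdot> ((idm A \<otimes> (mV \<cdot> ((idm A \<otimes> sigma) \<cdot> ((psi \<otimes> idm V) \<cdot>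
        (idm V \<otimes> (psi \<cdot> (idm V \<otimes> eA))))))) \<cdot> (psi \<otimes> idm V))))"
    by simp
  also have "\<dots> = M" by (simp only: twisted_unit) (simp add: mu_AV_def)
  finally show ?thesis .
qed

lemma mu_nabla_nabla: "M \<cdot> (N \<otimes> N) = M"
proof -
  have "M \<cdot> (N \<otimes> N) = (M \<cdot> (N \<otimes> idm (A \<odot> V))) \<cdot> (idm (A \<odot> V) \<otimes> N)"
    using interchange[of "idm (A \<odot> V)" N N "idm (A \<odot> V)"] by (simp del: diagram_simps)
  then show ?thesis by (simp only: mu_nabla_left mu_nabla_right)
qed

lemma mu_unit_right: "M \<cdot> (idm (A \<odot> V) \<otimes> eA \<otimes> idm V) = mV \<cdot> ((idm A \<otimes> sigma) \<cdot> (N \<otimes> idm V))"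
  by (simp add: nabla_def mu_AV_def)
lemma mu_unit_left: "M \<cdot> (eA \<otimes> idm V \<otimes> idm (A \<odot> V)) = mV \<cdot> ((idm A \<otimes> sigma) \<cdot> (psi \<otimes> idm V))"
  by (simp add: nabla_def mu_AV_def)
lemma mu_mult_left: "M \<cdot> (mV \<otimes> idm (A \<odot> V)) = mV \<cdot> (idm A \<otimes> M)"
  by (simp add: nabla_def mu_AV_def)

lemma mu_nu_unit: "M \<cdot> (nu \<otimes> eA \<otimes> idm V) = N \<cdot> (eA \<otimes> idm V)"
proof -
  have "M \<cdot> (nu \<otimes> eA \<otimes> idm V) = (M \<cdot> (idm (A \<odot> V) \<otimes> eA \<otimes> idm V)) \<cdot> (nu \<otimes> idm V)" by simp
  also have "\<dots> = mV \<cdot> ((idm A \<otimes> sigma) \<cdot> ((N \<cdot> nu) \<otimes> idm V))" by (simp add: mu_unit_right)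
  also have "\<dots> = N \<cdot> (eA \<otimes> idm V)" by (simp only: nabla_nu preunit_left)
  finally show ?thesis .
qed

lemma mu_beta_unit: "M \<cdot> (Beta \<otimes> eA \<otimes> idm V) = N"
proof -
  have "M \<cdot> (Beta \<otimes> eA \<otimes> idm V) = M \<cdot> ((mV \<otimes> idm (A \<odot> V)) \<cdot> ((idm A \<otimes> nu) \<otimes> (eA \<otimes> idm V)))"
    unfolding beta_def by (subst comp_tens_left) simp_all
  also have "\<dots> = (mV \<cdot> (idm A \<otimes> M)) \<cdot> ((idm A \<otimes> nu) \<otimes> (eA \<otimes> idm V))"
    by (simp del: diagram_simps flip: mu_mult_left)
  also have "\<dots> = mV \<cdot> (idm A \<otimes> (M \<cdot> (nu \<otimes> eA \<otimes> idm V)))" by simp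
  also have "\<dots> = (mV \<cdot> (idm A \<otimes> N)) \<cdot> (idm A \<otimes> eA \<otimes> idm V)" by (simp add: mu_nu_unit)
  also have "\<dots> = N" by (simp add: mV_nabla)
  finally show ?thesis .
qed

lemma mu_unit_beta: "M \<cdot> (eA \<otimes> idm V \<otimes> Beta) = psi"
proof -
  have "M \<cdot> (eA \<otimes> idm V \<otimes> Beta) = (M \<cdot> (eA \<otimes> idm V \<otimes> idm (A \<odot> V))) \<cdot> (idm V \<otimes> Beta)" by simp
  also have "\<dots> = (mV \<cdot> ((idm A \<otimes> sigma) \<cdot> (psi \<otimes> idm V))) \<cdot> (idm V \<otimes> Beta)"
    by (simp only: mu_unit_left)
  also have "\<dots> = mV \<cdot> ((idm A \<otimes> sigma) \<cdot> (((psi \<cdot> (idm V \<otimes> mA)) \<otimes> idm V) \<cdot> (idm (V \<odot> A) \<otimes> nu)))"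
    by (simp add: beta_def)
  also have "\<dots> = mV \<cdot> ((idm A \<otimes> sigma) \<cdot>
      (((mV \<cdot> ((idm A \<otimes> psi) \<cdot> (psi \<otimes> idm A))) \<otimes> idm V) \<cdot> (idm (V \<odot> A) \<otimes> nu)))"
    by (simp only: psi_mult)
  also have "\<dots> = mV \<cdot> ((idm A \<otimes> (mV \<cdot> ((idm A \<otimes> sigma) \<cdot> ((psi \<otimes> idm V) \<cdot> (idm V \<otimes> nu))))) \<cdot> psi)"
    by simp
  also have "\<dots> = (mV \<cdot> (idm A \<otimes> N)) \<cdot> ((idm A \<otimes> eA \<otimes> idm V) \<cdot> psi)" by (simp add: preunit_right)
  also have "\<dots> = N \<cdot> psi" by (simp add: mV_nabla)
  finally show ?thesis by (simp only: nabla_psi)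
qed

lemma mu_unit_unit: "M \<cdot> (eA \<otimes> idm V \<otimes> eA \<otimes> idm V) = sigma"
proof -
  let ?\<sigma>\<sigma> = "mV \<cdot> ((idm A \<otimes> sigma) \<cdot> (sigma \<otimes> idm V))"
  let ?\<sigma>\<nu> = "mV \<cdot> ((idm A \<otimes> sigma) \<cdot> ((psi \<otimes> idm V) \<cdot> (idm V \<otimes> nu)))"
  have "sigma = mV \<cdot> ((idm A \<otimes> sigma) \<cdot> ((psi \<otimes> idm V) \<cdot> (idm V \<otimes> (N \<cdot> (eA \<otimes> idm V)))))"
    by (simp only: twisted_unit flip: psi_unit)
  also have "\<dots> = mV \<cdot> ((idm A \<otimes> sigma) \<cdot>
      (((psi \<cdot> (idm V \<otimes> mA)) \<otimes> idm V) \<cdot> (idm V \<otimes> ((idm A \<otimes> sigma) \<cdot> (nu \<otimes> idm V)))))"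
    by (simp flip: preunit_left)
  also have "\<dots> = mV \<cdot> ((idm A \<otimes> sigma) \<cdot>
      (((mV \<cdot> ((idm A \<otimes> psi) \<cdot> (psi \<otimes> idm A))) \<otimes> idm V) \<cdot> (idm V \<otimes> ((idm A \<otimes> sigma) \<cdot> (nu \<otimes> idm V)))))"
    by (simp only: psi_mult)
  also have "\<dots> = mV \<cdot> ((idm A \<otimes> (mV \<cdot> ((idm A \<otimes> sigma) \<cdot> ((psi \<otimes> idm V) \<cdot> (idm V \<otimes> sigma))))) \<cdot>
      ((psi \<otimes> idm (V \<odot> V)) \<cdot> (idm V \<otimes> nu \<otimes> idm V)))"
    by simp
  also have "\<dots> = mV \<cdot> ((idm A \<otimes> ?\<sigma>\<sigma>) \<cdot> ((psi \<otimes> idm (V \<odot> V)) \<cdot> (idm V \<otimes> nu \<otimes> idm V)))"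
    by (simp only: cocycle)
  also have "(psi \<otimes> idm (V \<odot> V)) \<cdot> (idm V \<otimes> nu \<otimes> idm V) = ((psi \<otimes> idm V) \<cdot> (idm V \<otimes> nu)) \<otimes> idm V"
    using interchange[of "idm V \<otimes> nu" "psi \<otimes> idm V" "idm V" "idm V"] by (simp del: diagram_simps)
  also have "mV \<cdot> ((idm A \<otimes> ?\<sigma>\<sigma>) \<cdot> (((psi \<otimes> idm V) \<cdot> (idm V \<otimes> nu)) \<otimes> idm V)) =
      mV \<cdot> ((idm A \<otimes> sigma) \<cdot> (?\<sigma>\<nu> \<otimes> idm V))"
    by simp
  also have "\<dots> = mV \<cdot> ((idm A \<otimes> sigma) \<cdot> ((psi \<cdot> (idm V \<otimes> eA)) \<otimes> idm V))"
    by (simp only: preunit_right psi_unit)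
  also have "\<dots> = M \<cdot> (eA \<otimes> idm V \<otimes> eA \<otimes> idm V)"
    by (simp add: mu_AV_def)
  finally show ?thesis ..
qed

end

locale wcp_target =
  weak_crossed_product C A eA mA V psi sigma nu + B: monoid_obj C B eB mB
  for C :: "('o,'m) smcat" and A eA mA V psi sigma nu B eB mB +
  fixes iA iV
  assumes iA_alg_mor: "alg_mor C A eA mA B eB mB iA" and iV_hom: "hom C iV V B"
begin

lemma iA_dom [simp]: "dom iA = A" and iA_cod [simp]: "cod iA = B"
  and iV_dom [simp]: "dom iV = V" and iV_cod [simp]: "cod iV = B"
  and iA_unit [simp]: "iA \<cdot> eA = eB" and iA_mult [simp]: "iA \<cdot> mA = mB \<cdot> (iA \<otimes> iA)"
  and simp_guard_maps [simp]: "simp_guard iA" "simp_guard iV"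
  using iA_alg_mor iV_hom by (auto simp: alg_mor_def hom_def simp_guard_def)

definition phi where "phi = mB \<cdot> (iA \<otimes> iV)"

lemma dom_phi [simp]: "dom phi = A \<odot> V" and cod_phi [simp]: "cod phi = B"
  and simp_guard_phi [simp]: "simp_guard phi"
  by (simp_all add: phi_def simp_guard_def)

lemma phi_unit: "phi \<cdot> (eA \<otimes> idm V) = iV"
  by (simp add: phi_def)

lemma phi_mV: "phi \<cdot> mV = mB \<cdot> (iA \<otimes> phi)"
  by (simp add: phi_def)

lemma phi_nabla:
  assumes "phi \<cdot> psi = mB \<cdot> (iV \<otimes> iA)"
  shows "phi \<cdot> N = phi"
proof -
  have "phi \<cdot> N = mB \<cdot> ((idm B \<otimes> (phi \<cdot> psi)) \<cdot> (iA \<otimes> idm V \<otimes> eA))"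
    by (simp add: nabla_def phi_def)
  also have "\<dots> = mB \<cdot> ((idm B \<otimes> (mB \<cdot> (iV \<otimes> iA))) \<cdot> (iA \<otimes> idm V \<otimes> eA))"
    by (simp only: assms)
  also have "\<dots> = phi" by (simp add: phi_def)
  finally show ?thesis .
qed

lemma phi_beta:
  assumes "phi \<cdot> nu = eB"
  shows "phi \<cdot> Beta = iA"
proof -
  have "phi \<cdot> Beta = mB \<cdot> (iA \<otimes> (phi \<cdot> nu))" by (simp add: beta_def phi_def)
  then show ?thesis by (simp add: assms)
qed

lemma phi_mu:
  assumes on_psi: "phi \<cdot> psi = mB \<cdot> (iV \<otimes> iA)" and on_sigma: "phi \<cdot> sigma = mB \<cdot> (iV \<otimes> iV)"
  shows "phi \<cdot> M = mB \<cdot> (phi \<otimes> phi)"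
proof -
  have "phi \<cdot> M = (phi \<cdot> mV) \<cdot> ((idm A \<otimes> sigma) \<cdot> ((mV \<cdot> (idm A \<otimes> psi)) \<otimes> idm V))"
    by (simp add: mu_alt)
  also have "\<dots> = (mB \<cdot> (iA \<otimes> phi)) \<cdot> ((idm A \<otimes> sigma) \<cdot> ((mV \<cdot> (idm A \<otimes> psi)) \<otimes> idm V))"
    by (simp only: phi_mV)
  also have "\<dots> = mB \<cdot> ((iA \<otimes> (phi \<cdot> sigma)) \<cdot> ((mV \<cdot> (idm A \<otimes> psi)) \<otimes> idm V))" by simp
  also have "\<dots> = mB \<cdot> ((iA \<otimes> (mB \<cdot> (iV \<otimes> iV))) \<cdot> ((mV \<cdot> (idm A \<otimes> psi)) \<otimes> idm V))"
    by (simp only: on_sigma)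
  also have "\<dots> = mB \<cdot> (((phi \<cdot> mV) \<cdot> (idm A \<otimes> psi)) \<otimes> iV)" by (simp add: phi_def)
  also have "\<dots> = mB \<cdot> ((mB \<cdot> (iA \<otimes> (phi \<cdot> psi))) \<otimes> iV)" by (simp add: phi_mV)
  also have "\<dots> = mB \<cdot> ((mB \<cdot> (iA \<otimes> (mB \<cdot> (iV \<otimes> iA)))) \<otimes> iV)" by (simp only: on_psi)
  also have "\<dots> = mB \<cdot> (phi \<otimes> phi)" by (simp add: phi_def)
  finally show ?thesis .
qed

lemma phi_mu_tens:
  assumes "phi \<cdot> M = mB \<cdot> (phi \<otimes> phi)" "cod x = A \<odot> V" "cod y = A \<odot> V"
  shows "phi \<cdot> (M \<cdot> (x \<otimes> y)) = mB \<cdot> ((phi \<cdot> x) \<otimes> (phi \<cdot> y))"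
proof -
  have "phi \<cdot> (M \<cdot> (x \<otimes> y)) = (mB \<cdot> (phi \<otimes> phi)) \<cdot> (x \<otimes> y)"
    using assms by (simp add: assms(1)[symmetric] del: diagram_simps)
  then show ?thesis using assms(2,3) by simp
qed

end

locale wcp_image_target = wcp_target +
  fixes Z iAV pAV
  assumes nabla_splits: "splits C (nabla C A eA mA V psi) Z iAV pAV"
begin

abbreviation MZ where "MZ \<equiv> mu_AxV C A mA V psi sigma iAV pAV"

lemma iAV_dom [simp]: "dom iAV = Z" and iAV_cod [simp]: "cod iAV = A \<odot> V"
  and pAV_dom [simp]: "dom pAV = A \<odot> V" and pAV_cod [simp]: "cod pAV = Z"
  and simp_guard_split [simp]: "simp_guard iAV" "simp_guard pAV"
  and nabla_factors: "N = iAV \<cdot> pAV" and proj_inj: "pAV \<cdot> iAV = idm Z"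
  using nabla_splits by (auto simp: splits_def hom_def simp_guard_def)

lemma proj_inj_ctx [simp]: "cod h = Z \<Longrightarrow> pAV \<cdot> (iAV \<cdot> h) = h"
  by (simp add: comp_assoc_subst[OF _ _ proj_inj])

lemma proj_nabla: "pAV \<cdot> N = pAV"
  by (simp add: nabla_factors)

lemma comp_proj_mult:
  assumes w: "dom w = Z" "cod w = B" and mult: "w \<cdot> MZ = mB \<cdot> (w \<otimes> w)"
  shows "mB \<cdot> ((w \<cdot> pAV) \<otimes> (w \<cdot> pAV)) = (w \<cdot> pAV) \<cdot> M"
proof -
  have "mB \<cdot> ((w \<cdot> pAV) \<otimes> (w \<cdot> pAV)) = (w \<cdot> MZ) \<cdot> (pAV \<otimes> pAV)"
    using w interchange[of pAV w pAV w] by (simp add: mult del: diagram_simps)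
  also have "\<dots> = (w \<cdot> pAV) \<cdot> (M \<cdot> ((iAV \<cdot> pAV) \<otimes> (iAV \<cdot> pAV)))"
    using w interchange[of pAV iAV pAV iAV] unfolding mu_AxV_def by (simp del: diagram_simps)
  also have "\<dots> = (w \<cdot> pAV) \<cdot> M" by (simp only: mu_nabla_nabla flip: nabla_factors)
  finally show ?thesis .
qed

lemma comp_proj_eq_phi:
  assumes w: "dom w = Z" "cod w = B" and mult: "w \<cdot> MZ = mB \<cdot> (w \<otimes> w)"
    and on_beta: "w \<cdot> (pAV \<cdot> Beta) = iA" and on_unit: "w \<cdot> (pAV \<cdot> (eA \<otimes> idm V)) = iV"
  shows "w \<cdot> pAV = phi"
proof -
  have "w \<cdot> pAV = (w \<cdot> pAV) \<cdot> (M \<cdot> (Beta \<otimes> eA \<otimes> idm V))"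
    using w by (simp add: mu_beta_unit proj_nabla del: diagram_simps)
  also have "\<dots> = (mB \<cdot> ((w \<cdot> pAV) \<otimes> (w \<cdot> pAV))) \<cdot> (Beta \<otimes> eA \<otimes> idm V)"
    using w by (simp add: comp_proj_mult[OF w mult] del: diagram_simps)
  also have "\<dots> = mB \<cdot> ((w \<cdot> (pAV \<cdot> Beta)) \<otimes> (w \<cdot> (pAV \<cdot> (eA \<otimes> idm V))))"
    using w interchange[of Beta "w \<cdot> pAV" "eA \<otimes> idm V" "w \<cdot> pAV"] by (simp del: diagram_simps)
  finally show ?thesis by (simp add: on_beta on_unit phi_def del: diagram_simps)
qed

lemma conditions_of_morphism:
  assumes "alg_mor C Z (pAV \<cdot> nu) MZ B eB mB w"
    and on_beta: "w \<cdot> (pAV \<cdot> Beta) = iA" and on_unit: "w \<cdot> (pAV \<cdot> (eA \<otimes> idm V)) = iV"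
  shows "phi \<cdot> nu = eB" "phi \<cdot> psi = mB \<cdot> (iV \<otimes> iA)" "phi \<cdot> sigma = mB \<cdot> (iV \<otimes> iV)"
proof -
  from assms(1) have w: "dom w = Z" "cod w = B" and unit: "w \<cdot> (pAV \<cdot> nu) = eB"
    and mult: "w \<cdot> MZ = mB \<cdot> (w \<otimes> w)"
    by (auto simp: alg_mor_def hom_def)
  have w_proj: "w \<cdot> pAV = phi" by (rule comp_proj_eq_phi[OF w mult on_beta on_unit])
  have phi_mult: "phi \<cdot> M = mB \<cdot> (phi \<otimes> phi)"
    using comp_proj_mult[OF w mult] by (simp only: w_proj)
  have phi_on_beta: "phi \<cdot> Beta = iA"
    using on_beta w by (simp add: w_proj[symmetric] del: diagram_simps)
  show "phi \<cdot> nu = eB" using unit w by (simp add: w_proj[symmetric] del: diagram_simps)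
  show "phi \<cdot> psi = mB \<cdot> (iV \<otimes> iA)"
    using phi_mu_tens[OF phi_mult, of "eA \<otimes> idm V" Beta] by (simp add: mu_unit_beta phi_unit phi_on_beta)
  show "phi \<cdot> sigma = mB \<cdot> (iV \<otimes> iV)"
    using phi_mu_tens[OF phi_mult, of "eA \<otimes> idm V" "eA \<otimes> idm V"] by (simp add: mu_unit_unit phi_unit)
qed

lemma morphism_of_conditions:
  assumes on_nu: "phi \<cdot> nu = eB" and on_psi: "phi \<cdot> psi = mB \<cdot> (iV \<otimes> iA)"
    and on_sigma: "phi \<cdot> sigma = mB \<cdot> (iV \<otimes> iV)"
  shows "alg_mor C Z (pAV \<cdot> nu) MZ B eB mB (phi \<cdot> iAV)"
    and "(phi \<cdot> iAV) \<cdot> (pAV \<cdot> Beta) = iA" and "(phi \<cdot> iAV) \<cdot> (pAV \<cdot> (eA \<otimes> idm V)) = iV"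
proof -
  have through_nabla: "(phi \<cdot> iAV) \<cdot> (pAV \<cdot> x) = phi \<cdot> x" if "cod x = A \<odot> V" for x
  proof -
    have "(phi \<cdot> iAV) \<cdot> (pAV \<cdot> x) = (phi \<cdot> N) \<cdot> x"
      using that unfolding nabla_factors by (simp del: diagram_simps)
    then show ?thesis by (simp only: phi_nabla[OF on_psi])
  qed
  have "(phi \<cdot> iAV) \<cdot> MZ = phi \<cdot> (M \<cdot> (iAV \<otimes> iAV))"
    unfolding mu_AxV_def by (rule through_nabla) simp
  also have "\<dots> = mB \<cdot> ((phi \<cdot> iAV) \<otimes> (phi \<cdot> iAV))"
    by (simp add: phi_mu_tens[OF phi_mu[OF on_psi on_sigma]])
  finally show "alg_mor C Z (pAV \<cdot> nu) MZ B eB mB (phi \<cdot> iAV)"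
    using through_nabla[of nu] by (simp add: alg_mor_def hom_def on_nu del: diagram_simps)
  show "(phi \<cdot> iAV) \<cdot> (pAV \<cdot> Beta) = iA"
    using through_nabla[of Beta] phi_beta[OF on_nu] by simp
  show "(phi \<cdot> iAV) \<cdot> (pAV \<cdot> (eA \<otimes> idm V)) = iV"
    using through_nabla[of "eA \<otimes> idm V"] phi_unit by simp
qed

lemma morphism_unique:
  assumes "alg_mor C Z (pAV \<cdot> nu) MZ B eB mB w"
    and "w \<cdot> (pAV \<cdot> Beta) = iA" and "w \<cdot> (pAV \<cdot> (eA \<otimes> idm V)) = iV"
  shows "w = phi \<cdot> iAV"
proof -
  from assms(1) have w: "dom w = Z" "cod w = B" and mult: "w \<cdot> MZ = mB \<cdot> (w \<otimes> w)"
    by (auto simp: alg_mor_def hom_def)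
  have "w = (w \<cdot> pAV) \<cdot> iAV" using w by (simp add: proj_inj del: diagram_simps)
  then show ?thesis by (simp only: comp_proj_eq_phi[OF w mult assms(2,3)])
qed

theorem universal_property:
  "(\<exists>!\<omega>. alg_mor C Z (pAV \<cdot> nu) MZ B eB mB \<omega> \<and>
      \<omega> \<cdot> (pAV \<cdot> Beta) = iA \<and> \<omega> \<cdot> (pAV \<cdot> (eA \<otimes> idm V)) = iV) \<longleftrightarrow>
   (phi \<cdot> nu = eB \<and> phi \<cdot> psi = mB \<cdot> (iV \<otimes> iA) \<and> phi \<cdot> sigma = mB \<cdot> (iV \<otimes> iV))"
  using conditions_of_morphism morphism_of_conditions morphism_unique by metis

end

theorem theorem1p7:
  fixes C :: "('o,'m) smcat"
  assumes "strict_monoidal C"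
    and "wcp_preunit C A eA mA V psi sigma nu"
    and "splits C (nabla C A eA mA V psi) Z iAV pAV"
    and "is_algebra C B eB mB"
    and "alg_mor C A eA mA B eB mB iA"
    and "hom C iV V B"
  shows "(\<exists>!\<omega>. alg_mor C Z (Comp C pAV nu) (mu_AxV C A mA V psi sigma iAV pAV) B eB mB \<omega> \<and>
            Comp C \<omega> (Comp C pAV (beta C A mA V nu)) = iA \<and>
            Comp C \<omega> (Comp C pAV (TenM C eA (Idm C V))) = iV)
     \<longleftrightarrow>
     (Comp C mB (Comp C (TenM C iA iV) nu) = eB \<and>
      Comp C mB (Comp C (TenM C iA iV) psi) = Comp C mB (TenM C iV iA) \<and>
      Comp C mB (Comp C (TenM C iA iV) sigma) = Comp C mB (TenM C iV iV))"
proof -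
  interpret wcp_image_target C A eA mA V psi sigma nu B eB mB iA iV Z iAV pAV
    using assms by unfold_locales
  have "phi \<cdot> x = mB \<cdot> ((iA \<otimes> iV) \<cdot> x)" if "cod x = A \<odot> V" for x
    using that by (simp add: phi_def del: diagram_simps)
  then show ?thesis using universal_property by simp
qed

end
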